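(* For every 3-periodic of $\mathcal{E}$, the interior angles $\theta^\dagger_{1,1},\theta^\dagger_{1,2},\theta^\dagger_{1,3}$ of the focus-inversive triangle satisfy \[\sum_{i=1}^3\cos\theta^\dagger_{1,i}=\frac{\delta\,(a^2+c^2-\delta)}{a^2c^2};\] in particular this sum is invariant over the family (and independent of $\rho$).
   Context: Let $a>b>0$ and let $\mathcal{E}$ be the ellipse $x^2/a^2+y^2/b^2=1$. Set $c=\sqrt{a^2-b^2}$, $\delta=\sqrt{a^4-a^2b^2+b^4}$, and let the foci be $f_1=(-c,0)$, $f_2=(c,0)$. A 3-periodic is a triangle $P_1P_2P_3$ with vertices on $\mathcal{E}$ such that at each vertex the normal to $\mathcal{E}$ bisects the angle formed by the two sides meeting at that vertex; these form a one-parameter family (one through every point of $\mathcal{E}$). Fix $\rho>0$; the focus-inversive triangle has vertices $P_i^\dagger=f_1+(\rho/d_{1,i})^2(P_i-f_1)$, $d_{1,i}=|P_i-f_1|$. *)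

theory Defs
  imports "HOL-Analysis.Analysis"
begin

type_synonym pt = "real \<times> real"

definition on_ellipse :: "real \<Rightarrow> real \<Rightarrow> pt \<Rightarrow> bool" where
  "on_ellipse a b P \<longleftrightarrow> (fst P)\<^sup>2 / a\<^sup>2 + (snd P)\<^sup>2 / b\<^sup>2 = 1"

definition ell_normal :: "real \<Rightarrow> real \<Rightarrow> pt \<Rightarrow> pt" where
  "ell_normal a b P = (fst P / a\<^sup>2, snd P / b\<^sup>2)"

definition vangle :: "pt \<Rightarrow> pt \<Rightarrow> real" where
  "vangle u v = arccos ((u \<bullet> v) / (norm u * norm v))"

definition tri_angle :: "pt \<Rightarrow> pt \<Rightarrow> pt \<Rightarrow> real" where
  "tri_angle A B C = vangle (B - A) (C - A)"

definition normal_bisects :: "real \<Rightarrow> real \<Rightarrow> pt \<Rightarrow> pt \<Rightarrow> pt \<Rightarrow> bool" where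
  "normal_bisects a b P Q R \<longleftrightarrow>
     vangle (ell_normal a b P) (Q - P) = vangle (ell_normal a b P) (R - P)"

definition three_periodic :: "real \<Rightarrow> real \<Rightarrow> pt \<Rightarrow> pt \<Rightarrow> pt \<Rightarrow> bool" where
  "three_periodic a b P1 P2 P3 \<longleftrightarrow>
     on_ellipse a b P1 \<and> on_ellipse a b P2 \<and> on_ellipse a b P3 \<and>
     P1 \<noteq> P2 \<and> P2 \<noteq> P3 \<and> P1 \<noteq> P3 \<and>
     normal_bisects a b P1 P2 P3 \<and> normal_bisects a b P2 P3 P1 \<and>
     normal_bisects a b P3 P1 P2"

definition circ_inv :: "pt \<Rightarrow> real \<Rightarrow> pt \<Rightarrow> pt" where
  "circ_inv f \<rho> P = f + (\<rho> / dist P f)\<^sup>2 *\<^sub>R (P - f)"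

end

theory Submission
  imports Defs
begin

(*
  Write the vertices as P_i = (a cos t_i, b sin t_i) and put z_i = exp (i t_i).  Since the normal n_i
  at P_i satisfies n_i . (P_j - P_i) = cos (t_i - t_j) - 1, the bisector condition says that
  (1 - cos (t_i - t_j)) / |P_i P_j| takes one value J on all three sides.  Squared, this is a
  symmetric biquadratic relation between z_i and z_j with parameter k = J^2 c^2, and Vieta's formulas
  for the three z_i force c^2 k^2 + 2 (a^2 + b^2) k - 3 c^2 = 0, i.e. k c^2 = 2 delta - a^2 - b^2.
  Inversion about f1 maps the triangle to one similar to the triangle with sides |P_i P_j| |P_k f1|,
  where |P_k f1| = a + c cos t_k.  The law of cosines and the relations between the z_i then give
  cos theta_i = (delta + b^2) / a^2 + (delta - 2 a^2 + b^2) b^2 / (a c^2 |P_i f2|), and Vieta's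
  formulas once more give the sum of 1 / |P_i f2| = a (2 delta - a^2 - b^2) / ((a^2 - delta) (delta - b^2)).
*)

section \<open>Triangles and circle inversion\<close>

definition cos_of_sides :: "real \<Rightarrow> real \<Rightarrow> real \<Rightarrow> real" where
  "cos_of_sides x y z = (y\<^sup>2 + z\<^sup>2 - x\<^sup>2) / (2 * y * z)"

lemma cos_of_sides_scale:
  assumes "t \<noteq> 0"
  shows "cos_of_sides (t * x) (t * y) (t * z) = cos_of_sides x y z"
proof -
  have num: "(t * y)\<^sup>2 + (t * z)\<^sup>2 - (t * x)\<^sup>2 = t\<^sup>2 * (y\<^sup>2 + z\<^sup>2 - x\<^sup>2)"
    by (simp add: power_mult_distrib algebra_simps)
  have den: "2 * (t * y) * (t * z) = t\<^sup>2 * (2 * y * z)"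
    by (simp only: power2_eq_square ac_simps)
  show ?thesis
    unfolding cos_of_sides_def num den using assms by simp
qed

lemma cos_vangle: "cos (vangle u v) = (u \<bullet> v) / (norm u * norm v)"
proof -
  let ?x = "(u \<bullet> v) / (norm u * norm v)"
  have "\<bar>u \<bullet> v\<bar> \<le> norm u * norm v"
    by (rule Cauchy_Schwarz_ineq2)
  then have bound: "\<bar>?x\<bar> \<le> 1"
    by (cases "u = 0 \<or> v = 0") (auto simp: abs_divide divide_le_eq_1)
  have "- 1 \<le> ?x" "?x \<le> 1"
    using abs_le_D1[OF bound] abs_le_D2[OF bound] by linarith+
  then show ?thesis
    unfolding vangle_def by (rule cos_arccos)
qed

lemma cos_tri_angle: "cos (tri_angle A B C) = cos_of_sides (dist B C) (dist A B) (dist A C)"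
proof -
  have "norm (B - A) = dist A B" "norm (C - A) = dist A C"
    by (simp_all add: dist_norm norm_minus_commute)
  moreover have "(B - A) \<bullet> (C - A) = ((dist A B)\<^sup>2 + (dist A C)\<^sup>2 - (dist B C)\<^sup>2) / 2"
    using dot_norm_neg[of "B - A" "C - A"] by (simp add: dist_norm norm_minus_commute)
  ultimately show ?thesis
    unfolding tri_angle_def cos_vangle cos_of_sides_def
    by (simp only: divide_divide_eq_left mult.assoc)
qed

lemma dist_circ_inv:
  assumes "P \<noteq> f" "Q \<noteq> f"
  shows "dist (circ_inv f \<rho> P) (circ_inv f \<rho> Q) = \<rho>\<^sup>2 * dist P Q / (dist P f * dist Q f)"
proof -
  define u v where "u = P - f" and "v = Q - f"
  have "u \<noteq> 0" "v \<noteq> 0"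
    using assms by (auto simp: u_def v_def)
  have diff: "circ_inv f \<rho> P - circ_inv f \<rho> Q = \<rho>\<^sup>2 *\<^sub>R (u /\<^sub>R (norm u)\<^sup>2 - v /\<^sub>R (norm v)\<^sup>2)"
    by (simp add: circ_inv_def u_def v_def dist_norm scaleR_diff_right divide_inverse power_mult_distrib power_inverse)
  have "(norm (u /\<^sub>R (norm u)\<^sup>2 - v /\<^sub>R (norm v)\<^sup>2))\<^sup>2 = (norm (u - v) / (norm u * norm v))\<^sup>2"
    using \<open>u \<noteq> 0\<close> \<open>v \<noteq> 0\<close>
    by (simp add: power2_norm_eq_inner inner_diff_left inner_diff_right inner_commute[of v u]
        power_divide power_mult_distrib field_simps)
  then have "norm (u /\<^sub>R (norm u)\<^sup>2 - v /\<^sub>R (norm v)\<^sup>2) = norm (u - v) / (norm u * norm v)"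
    by (rule power2_eq_imp_eq) simp_all
  then show ?thesis
    unfolding dist_norm diff by (simp add: u_def v_def)
qed

lemma cos_tri_angle_circ_inv:
  assumes "\<rho> \<noteq> 0" "P1 \<noteq> f" "P2 \<noteq> f" "P3 \<noteq> f"
  shows "cos (tri_angle (circ_inv f \<rho> P1) (circ_inv f \<rho> P2) (circ_inv f \<rho> P3))
    = cos_of_sides (dist P2 P3 * dist P1 f) (dist P1 P2 * dist P3 f) (dist P1 P3 * dist P2 f)"
proof -
  define t where "t = \<rho>\<^sup>2 / (dist P1 f * dist P2 f * dist P3 f)"
  have "t \<noteq> 0"
    using assms by (simp add: t_def)
  moreover have "dist (circ_inv f \<rho> P2) (circ_inv f \<rho> P3) = t * (dist P2 P3 * dist P1 f)"
    and "dist (circ_inv f \<rho> P1) (circ_inv f \<rho> P2) = t * (dist P1 P2 * dist P3 f)"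
    and "dist (circ_inv f \<rho> P1) (circ_inv f \<rho> P3) = t * (dist P1 P3 * dist P2 f)"
    using assms by (simp_all add: dist_circ_inv t_def)
  ultimately show ?thesis
    unfolding cos_tri_angle by (simp add: cos_of_sides_scale)
qed

section \<open>A symmetric biquadratic relation\<close>

(* For unit z and w this says Re (z * cnj w) - k * Re (z * w) = g, see chord_rel_of_real. *)
definition chord_rel :: "'a::field \<Rightarrow> 'a \<Rightarrow> 'a \<Rightarrow> 'a \<Rightarrow> bool" where
  "chord_rel k g z w \<longleftrightarrow> z\<^sup>2 + w\<^sup>2 - k * (z\<^sup>2 * w\<^sup>2 + 1) = 2 * g * z * w"

lemma chord_rel_sym: "chord_rel k g z w \<Longrightarrow> chord_rel k g w z"
  unfolding chord_rel_def by (simp add: algebra_simps)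

lemma chord_rel_roots:
  fixes z u v k g :: "'a::field"
  assumes "chord_rel k g z u" "chord_rel k g z v" "u \<noteq> v"
  shows "(u + v) * (1 - k * z\<^sup>2) = 2 * g * z" "u * v * (1 - k * z\<^sup>2) = z\<^sup>2 - k"
proof -
  have "(u - v) * ((u + v) * (1 - k * z\<^sup>2) - 2 * g * z) = 0"
    using assms(1,2) unfolding chord_rel_def by algebra
  then show sum: "(u + v) * (1 - k * z\<^sup>2) = 2 * g * z"
    using assms(3) by simp
  show "u * v * (1 - k * z\<^sup>2) = z\<^sup>2 - k"
    using sum assms(1) unfolding chord_rel_def by algebra
qed

lemma vertex_cos_poly_identity:
  fixes z1 z2 z3 k a c :: "'a::field_char_0"
  assumes "(z2 + z3) * (1 - k * z1\<^sup>2) = (k\<^sup>2 - 1) * z1" "z2 * z3 * (1 - k * z1\<^sup>2) = z1\<^sup>2 - k"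
    and "1 - k * z1\<^sup>2 \<noteq> 0" and "c\<^sup>2 * k\<^sup>2 + 2 * (2 * a\<^sup>2 - c\<^sup>2) * k - 3 * c\<^sup>2 = 0"
  shows "(((z1 - z3)\<^sup>2 * (c * (z2\<^sup>2 + 1) + 2 * a * z2))\<^sup>2 + ((z1 - z2)\<^sup>2 * (c * (z3\<^sup>2 + 1) + 2 * a * z3))\<^sup>2
          - ((z2 - z3)\<^sup>2 * (c * (z1\<^sup>2 + 1) + 2 * a * z1))\<^sup>2) * (2 * a * z1 - c * (z1\<^sup>2 + 1)) * a\<^sup>2
       = ((z1 - z3)\<^sup>2 * (c * (z2\<^sup>2 + 1) + 2 * a * z2)) * ((z1 - z2)\<^sup>2 * (c * (z3\<^sup>2 + 1) + 2 * a * z3))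
          * (2 * a ^ 3 * (1 + k) * z1 - c * (k * c\<^sup>2 + 4 * a\<^sup>2 - 3 * c\<^sup>2) * (z1\<^sup>2 + 1))"
  using assms by algebra

lemma chord_rel_triangle:
  fixes z1 z2 z3 k g :: "'a::field"
  assumes r12: "chord_rel k g z1 z2" and r23: "chord_rel k g z2 z3" and r13: "chord_rel k g z1 z3"
    and d12: "z1 \<noteq> z2" and d23: "z2 \<noteq> z3" and d13: "z1 \<noteq> z3" and "z1 \<noteq> 0"
  shows "z1 + z2 + z3 = - k * (z1 * z2 * z3)" "z1 * z2 + z2 * z3 + z1 * z3 = - k"
    "2 * g = k\<^sup>2 - 1"
proof -
  define e3 where "e3 = z1 * z2 * z3"
  \<comment> \<open>each z_i is a root of the cubic t^3 + k e3 t^2 - k t - e3\<close>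
  have c1: "z1 ^ 3 + k * e3 * z1\<^sup>2 - k * z1 - e3 = 0"
    using chord_rel_roots(2)[OF r12 r13 d23] unfolding e3_def by algebra
  have c2: "z2 ^ 3 + k * e3 * z2\<^sup>2 - k * z2 - e3 = 0"
    using chord_rel_roots(2)[OF chord_rel_sym[OF r12] r23 d13] unfolding e3_def by algebra
  have c3: "z3 ^ 3 + k * e3 * z3\<^sup>2 - k * z3 - e3 = 0"
    using chord_rel_roots(2)[OF chord_rel_sym[OF r13] chord_rel_sym[OF r23] d12]
    unfolding e3_def by algebra
  have "(z1 - z2) * (z1\<^sup>2 + z1 * z2 + z2\<^sup>2 + k * e3 * (z1 + z2) - k) = 0"
    using c1 c2 by algebra
  with d12 have h12: "z1\<^sup>2 + z1 * z2 + z2\<^sup>2 + k * e3 * (z1 + z2) - k = 0"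
    by simp
  have "(z1 - z3) * (z1\<^sup>2 + z1 * z3 + z3\<^sup>2 + k * e3 * (z1 + z3) - k) = 0"
    using c1 c3 by algebra
  with d13 have h13: "z1\<^sup>2 + z1 * z3 + z3\<^sup>2 + k * e3 * (z1 + z3) - k = 0"
    by simp
  have "(z2 - z3) * (z1 + z2 + z3 + k * e3) = 0"
    using h12 h13 by algebra
  with d23 have e1: "z1 + z2 + z3 = - k * e3"
    by (simp add: add_eq_0_iff2)
  then show "z1 + z2 + z3 = - k * (z1 * z2 * z3)"
    by (simp add: e3_def)
  show "z1 * z2 + z2 * z3 + z1 * z3 = - k"
    using h12 e1 by algebra
  have "z1 * (2 * g - (k\<^sup>2 - 1)) = 0"
    using chord_rel_roots(1)[OF r12 r13 d23] e1 c1 by algebra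
  with \<open>z1 \<noteq> 0\<close> show "2 * g = k\<^sup>2 - 1"
    by simp
qed

lemma reciprocal_sum_poly_identity:
  fixes z1 z2 z3 k a c :: "'a::field_char_0"
  assumes "z1 + z2 + z3 = - k * (z1 * z2 * z3)" "z1 * z2 + z2 * z3 + z1 * z3 = - k"
    and "c\<^sup>2 * k\<^sup>2 + 2 * (2 * a\<^sup>2 - c\<^sup>2) * k - 3 * c\<^sup>2 = 0"
  shows "(z1 * (c * (z2\<^sup>2 + 1) - 2 * a * z2) * (c * (z3\<^sup>2 + 1) - 2 * a * z3)
          + z2 * (c * (z1\<^sup>2 + 1) - 2 * a * z1) * (c * (z3\<^sup>2 + 1) - 2 * a * z3)
          + z3 * (c * (z1\<^sup>2 + 1) - 2 * a * z1) * (c * (z2\<^sup>2 + 1) - 2 * a * z2)) * (c\<^sup>2 * (k + 1) - 2 * k * a\<^sup>2)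
       = a * k * ((c * (z1\<^sup>2 + 1) - 2 * a * z1) * (c * (z2\<^sup>2 + 1) - 2 * a * z2) * (c * (z3\<^sup>2 + 1) - 2 * a * z3))"
  using assms by algebra

section \<open>Points of the unit circle\<close>

(* For z = exp (i s) and w = exp (i t) this is the versine 1 - cos (s - t). *)
definition vers :: "complex \<Rightarrow> complex \<Rightarrow> real" where
  "vers z w = 1 - Re (z * cnj w)"

lemma unit_mult_cnj: "cmod z = 1 \<Longrightarrow> z * cnj z = 1"
  using complex_norm_square[of z] by simp

lemma two_Re_eq_add_cnj: "2 * complex_of_real (Re z) = z + cnj z"
  using complex_add_cnj[of z] by simp

lemma unit_square_add_one:
  fixes z :: complex
  assumes "cmod z = 1"
  shows "z\<^sup>2 + 1 = 2 * complex_of_real (Re z) * z"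
  using unit_mult_cnj[OF assms] two_Re_eq_add_cnj[of z] by algebra

lemma unit_diff_square:
  fixes z w :: complex
  assumes "cmod z = 1" "cmod w = 1"
  shows "(z - w)\<^sup>2 = - 2 * z * w * vers z w"
proof -
  have "2 * complex_of_real (vers z w) = 2 - (z * cnj w + cnj z * w)"
    using two_Re_eq_add_cnj[of "z * cnj w"] unfolding vers_def by simp
  then show ?thesis
    using unit_mult_cnj[OF assms(1)] unit_mult_cnj[OF assms(2)] by algebra
qed

lemma vers_commute: "vers z w = vers w z"
  unfolding vers_def by (simp add: algebra_simps)

lemma unit_vers_eq:
  assumes "cmod z = 1" "cmod w = 1"
  shows "2 * vers z w = (cmod (z - w))\<^sup>2"
  using assms unfolding vers_def cmod_power2[of "z - w"]
  by (simp add: cmod_def power2_diff algebra_simps)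

lemma unit_vers_pos:
  assumes "cmod z = 1" "cmod w = 1" "z \<noteq> w"
  shows "vers z w > 0"
proof -
  have "(cmod (z - w))\<^sup>2 > 0"
    using assms(3) by simp
  then show ?thesis
    using unit_vers_eq[OF assms(1,2)] by linarith
qed

lemma chord_rel_of_real:
  fixes z w :: complex and k g :: real
  assumes "cmod z = 1" "cmod w = 1" "Re (z * cnj w) - k * Re (z * w) = g"
  shows "chord_rel (of_real k) (of_real g) z w"
proof -
  have "2 * complex_of_real (Re (z * cnj w)) - k * (2 * complex_of_real (Re (z * w))) = 2 * g"
    using arg_cong[OF assms(3), of "\<lambda>x. 2 * complex_of_real x"] by (simp add: algebra_simps)
  then have "z * cnj w + cnj z * w - k * (z * w + cnj z * cnj w) = 2 * g"
    unfolding two_Re_eq_add_cnj by simp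
  moreover have "complex_of_real (2 * g) = 2 * complex_of_real g"
    by simp
  ultimately show ?thesis
    using unit_mult_cnj[OF assms(1)] unit_mult_cnj[OF assms(2)]
    unfolding chord_rel_def by algebra
qed

lemma unit_chord_factor:
  fixes z w u :: complex
  assumes "cmod z = 1" "cmod w = 1" "cmod u = 1"
  shows "(z - w)\<^sup>2 * (of_real c * (u\<^sup>2 + 1) + 2 * of_real a * u)
    = - 4 * (z * w * u) * of_real ((a + c * Re u) * vers z w)"
  unfolding unit_diff_square[OF assms(1,2)] unit_square_add_one[OF assms(3)]
    of_real_mult of_real_add by algebra

lemma unit_vertex_factor:
  fixes z :: complex
  assumes "cmod z = 1"
  shows "2 * of_real p * z - of_real q * (z\<^sup>2 + 1) = 2 * z * of_real (p - q * Re z)"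
  unfolding unit_square_add_one[OF assms] of_real_mult of_real_diff by algebra

lemma unit_vertex_cos_identity:
  fixes z1 z2 z3 :: complex and a c k :: real
  assumes u1: "cmod z1 = 1" and u2: "cmod z2 = 1" and u3: "cmod z3 = 1" and "z2 \<noteq> z3"
    and r12: "chord_rel (of_real k) (of_real ((k\<^sup>2 - 1) / 2)) z1 z2"
    and r13: "chord_rel (of_real k) (of_real ((k\<^sup>2 - 1) / 2)) z1 z3"
    and k_eq: "c\<^sup>2 * k\<^sup>2 + 2 * (2 * a\<^sup>2 - c\<^sup>2) * k - 3 * c\<^sup>2 = 0" and "0 \<le> k" "k < 1"
  shows "(((a + c * Re z2) * vers z1 z3)\<^sup>2 + ((a + c * Re z3) * vers z1 z2)\<^sup>2
          - ((a + c * Re z1) * vers z2 z3)\<^sup>2) * (a - c * Re z1) * a\<^sup>2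
       = ((a + c * Re z2) * vers z1 z3) * ((a + c * Re z3) * vers z1 z2)
          * (a ^ 3 * (1 + k) - c * (k * c\<^sup>2 + 4 * a\<^sup>2 - 3 * c\<^sup>2) * Re z1)"
proof -
  define K A C where "K = complex_of_real k" and "A = complex_of_real a" and "C = complex_of_real c"
  define l1 l2 l3 where "l1 = (a + c * Re z1) * vers z2 z3" and "l2 = (a + c * Re z2) * vers z1 z3"
    and "l3 = (a + c * Re z3) * vers z1 z2"
  define e n where "e = a - c * Re z1" and "n = a ^ 3 * (1 + k) - c * (k * c\<^sup>2 + 4 * a\<^sup>2 - 3 * c\<^sup>2) * Re z1"
  define t s where "t = - 4 * (z1 * z2 * z3)" and "s = 2 * z1"
  \<comment> \<open>every factor of the polynomial identity is a multiple of t or s by one of the real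
    quantities l1, l2, l3, e, n\<close>
  have "2 * complex_of_real ((k\<^sup>2 - 1) / 2) = K\<^sup>2 - 1"
    by (simp add: K_def)
  then have sum: "(z2 + z3) * (1 - K * z1\<^sup>2) = (K\<^sup>2 - 1) * z1"
    using chord_rel_roots(1)[OF r12 r13 \<open>z2 \<noteq> z3\<close>] unfolding K_def by algebra
  have prod: "z2 * z3 * (1 - K * z1\<^sup>2) = z1\<^sup>2 - K"
    using chord_rel_roots(2)[OF r12 r13 \<open>z2 \<noteq> z3\<close>] unfolding K_def .
  have nz: "1 - K * z1\<^sup>2 \<noteq> 0"
  proof
    assume "1 - K * z1\<^sup>2 = 0"
    then have "cmod (K * z1\<^sup>2) = 1"
      by (simp add: eq_commute[of 1])
    with u1 \<open>0 \<le> k\<close> \<open>k < 1\<close> show False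
      by (simp add: K_def norm_mult norm_power)
  qed
  have "C\<^sup>2 * K\<^sup>2 + 2 * (2 * A\<^sup>2 - C\<^sup>2) * K - 3 * C\<^sup>2 = 0"
    using arg_cong[OF k_eq, of complex_of_real] by (simp add: K_def A_def C_def)
  note identity = vertex_cos_poly_identity[OF sum prod nz this]
  have "(z1 - z3)\<^sup>2 * (C * (z2\<^sup>2 + 1) + 2 * A * z2) = t * of_real l2"
    using unit_chord_factor[OF u1 u3 u2, of c a] by (simp add: A_def C_def t_def l2_def ac_simps)
  moreover have "(z1 - z2)\<^sup>2 * (C * (z3\<^sup>2 + 1) + 2 * A * z3) = t * of_real l3"
    using unit_chord_factor[OF u1 u2 u3, of c a] by (simp add: A_def C_def t_def l3_def ac_simps)
  moreover have "(z2 - z3)\<^sup>2 * (C * (z1\<^sup>2 + 1) + 2 * A * z1) = t * of_real l1"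
    using unit_chord_factor[OF u2 u3 u1, of c a] by (simp add: A_def C_def t_def l1_def ac_simps)
  moreover have "2 * A * z1 - C * (z1\<^sup>2 + 1) = s * of_real e"
    using unit_vertex_factor[OF u1, of a c] by (simp add: A_def C_def s_def e_def)
  moreover have "2 * A ^ 3 * (1 + K) * z1 - C * (K * C\<^sup>2 + 4 * A\<^sup>2 - 3 * C\<^sup>2) * (z1\<^sup>2 + 1) = s * of_real n"
    using unit_vertex_factor[OF u1, of "a ^ 3 * (1 + k)" "c * (k * c\<^sup>2 + 4 * a\<^sup>2 - 3 * c\<^sup>2)"]
    by (simp add: A_def C_def K_def s_def n_def mult.assoc)
  ultimately have "((t * of_real l2)\<^sup>2 + (t * of_real l3)\<^sup>2 - (t * of_real l1)\<^sup>2) * (s * of_real e) * A\<^sup>2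
      = (t * of_real l2) * (t * of_real l3) * (s * of_real n)"
    using identity by simp
  moreover have "t \<noteq> 0" "s \<noteq> 0"
    using u1 u2 u3 by (auto simp: t_def s_def)
  ultimately have "((of_real l2)\<^sup>2 + (of_real l3)\<^sup>2 - (of_real l1)\<^sup>2) * of_real e * A\<^sup>2
      = of_real l2 * of_real l3 * (of_real n :: complex)"
    by algebra
  then have "(l2\<^sup>2 + l3\<^sup>2 - l1\<^sup>2) * e * a\<^sup>2 = l2 * l3 * n"
    unfolding A_def of_real_power[symmetric] of_real_mult[symmetric] of_real_add[symmetric]
      of_real_diff[symmetric] of_real_eq_iff .
  then show ?thesis
    unfolding l1_def l2_def l3_def e_def n_def .
qed

lemma unit_reciprocal_sum_identity:
  fixes z1 z2 z3 :: complex and a c k g :: real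
  assumes u1: "cmod z1 = 1" and u2: "cmod z2 = 1" and u3: "cmod z3 = 1"
    and "chord_rel (of_real k) (of_real g) z1 z2" "chord_rel (of_real k) (of_real g) z2 z3"
      "chord_rel (of_real k) (of_real g) z1 z3"
    and "z1 \<noteq> z2" "z2 \<noteq> z3" "z1 \<noteq> z3"
    and k_eq: "c\<^sup>2 * k\<^sup>2 + 2 * (2 * a\<^sup>2 - c\<^sup>2) * k - 3 * c\<^sup>2 = 0"
  shows "((a - c * Re z1) * (a - c * Re z2) + (a - c * Re z1) * (a - c * Re z3)
          + (a - c * Re z2) * (a - c * Re z3)) * (2 * k * a\<^sup>2 - c\<^sup>2 * (k + 1))
       = 2 * a * k * ((a - c * Re z1) * (a - c * Re z2) * (a - c * Re z3))"
    (is "?L = ?R")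
proof -
  have "z1 \<noteq> 0" "z2 \<noteq> 0" "z3 \<noteq> 0"
    using u1 u2 u3 by auto
  note vieta = chord_rel_triangle[OF assms(4-9) \<open>z1 \<noteq> 0\<close>]
  have "(of_real c)\<^sup>2 * (of_real k)\<^sup>2 + 2 * (2 * (of_real a)\<^sup>2 - (of_real c)\<^sup>2) * of_real k
      - 3 * (of_real c :: complex)\<^sup>2 = 0"
    using arg_cong[OF k_eq, of complex_of_real] by simp
  then have "8 * (z1 * z2 * z3) * complex_of_real (?L - ?R) = 0"
    using reciprocal_sum_poly_identity[OF vieta(1,2), where a = "of_real a" and c = "of_real c"]
    unfolding unit_square_add_one[OF u1] unit_square_add_one[OF u2] unit_square_add_one[OF u3]
      of_real_mult of_real_add of_real_diff of_real_power of_real_numeral of_real_1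
    by algebra
  with \<open>z1 \<noteq> 0\<close> \<open>z2 \<noteq> 0\<close> \<open>z3 \<noteq> 0\<close> show ?thesis
    by (simp del: of_real_diff)
qed

section \<open>The ellipse and its 3-periodics\<close>

lemma three_periodic_rotate: "three_periodic a b P1 P2 P3 \<Longrightarrow> three_periodic a b P2 P3 P1"
  unfolding three_periodic_def by auto

locale ellipse =
  fixes a b :: real
  assumes b_pos: "0 < b" and b_less_a: "b < a"
begin

definition c :: real where "c = sqrt (a\<^sup>2 - b\<^sup>2)"

definition \<delta> :: real where "\<delta> = sqrt (a ^ 4 - a\<^sup>2 * b\<^sup>2 + b ^ 4)"

(* The positive root of c^2 k^2 + 2 (a^2 + b^2) k - 3 c^2 = 0, see k_eq and k_unique. *)
definition k :: real where "k = (2 * \<delta> - a\<^sup>2 - b\<^sup>2) / c\<^sup>2"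

(* P = (a cos t, b sin t) is sent to exp (i t). *)
definition ecc :: "pt \<Rightarrow> complex" where "ecc P = Complex (fst P / a) (snd P / b)"

lemma a_pos: "0 < a"
  using b_pos b_less_a by linarith

lemma b_sq_less_a_sq: "b\<^sup>2 < a\<^sup>2"
  using b_pos b_less_a by (simp add: power_strict_mono)

lemma c_sq: "c\<^sup>2 = a\<^sup>2 - b\<^sup>2"
  using b_sq_less_a_sq by (simp add: c_def)

lemma c_pos: "0 < c"
  using b_sq_less_a_sq by (simp add: c_def)

lemma c_less_a: "c < a"
proof -
  have "c\<^sup>2 < a\<^sup>2"
    using c_sq b_pos by simp
  then show ?thesis
    by (rule power_less_imp_less_base) (use a_pos in simp)
qed

lemma \<delta>_radicand_pos: "0 < a ^ 4 - a\<^sup>2 * b\<^sup>2 + b ^ 4"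
proof -
  have "0 < (a\<^sup>2 - b\<^sup>2)\<^sup>2 + a\<^sup>2 * b\<^sup>2"
    using a_pos b_pos by (simp add: add_nonneg_pos)
  also have "\<dots> = a ^ 4 - a\<^sup>2 * b\<^sup>2 + b ^ 4"
    by algebra
  finally show ?thesis .
qed

lemma \<delta>_pos: "0 < \<delta>"
  using \<delta>_radicand_pos by (simp add: \<delta>_def)

lemma \<delta>_sq: "\<delta>\<^sup>2 = a ^ 4 - a\<^sup>2 * b\<^sup>2 + b ^ 4"
  using \<delta>_radicand_pos by (simp add: \<delta>_def)

lemma \<delta>_bounds: "b\<^sup>2 < \<delta>" "\<delta> < a\<^sup>2"
proof -
  have "\<delta>\<^sup>2 - (b\<^sup>2)\<^sup>2 = a\<^sup>2 * (a\<^sup>2 - b\<^sup>2)" "(a\<^sup>2)\<^sup>2 - \<delta>\<^sup>2 = b\<^sup>2 * (a\<^sup>2 - b\<^sup>2)"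
    unfolding \<delta>_sq by algebra+
  moreover have "0 < a\<^sup>2 * (a\<^sup>2 - b\<^sup>2)" "0 < b\<^sup>2 * (a\<^sup>2 - b\<^sup>2)"
    using a_pos b_pos b_sq_less_a_sq by simp_all
  ultimately have "(b\<^sup>2)\<^sup>2 < \<delta>\<^sup>2" "\<delta>\<^sup>2 < (a\<^sup>2)\<^sup>2"
    by linarith+
  then show "b\<^sup>2 < \<delta>" "\<delta> < a\<^sup>2"
    using \<delta>_pos by (simp_all only: power_less_imp_less_base zero_le_power2 less_imp_le)
qed

lemma k_c_sq: "k * c\<^sup>2 = 2 * \<delta> - a\<^sup>2 - b\<^sup>2"
  using c_pos by (simp add: k_def)

lemma k_eq: "c\<^sup>2 * k\<^sup>2 + 2 * (2 * a\<^sup>2 - c\<^sup>2) * k - 3 * c\<^sup>2 = 0"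
proof -
  have "c\<^sup>2 * (c\<^sup>2 * k\<^sup>2 + 2 * (2 * a\<^sup>2 - c\<^sup>2) * k - 3 * c\<^sup>2) = 0"
    using k_c_sq c_sq \<delta>_sq by algebra
  then show ?thesis
    using c_pos by simp
qed

lemma k_pos: "0 < k"
proof -
  have "(2 * \<delta>)\<^sup>2 - (a\<^sup>2 + b\<^sup>2)\<^sup>2 = 3 * (a\<^sup>2 - b\<^sup>2)\<^sup>2"
    using \<delta>_sq by algebra
  moreover have "0 < (a\<^sup>2 - b\<^sup>2)\<^sup>2"
    using b_sq_less_a_sq by simp
  ultimately have "(a\<^sup>2 + b\<^sup>2)\<^sup>2 < (2 * \<delta>)\<^sup>2"
    by linarith
  then have "a\<^sup>2 + b\<^sup>2 < 2 * \<delta>"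
    by (rule power_less_imp_less_base) (use \<delta>_pos in simp)
  then show ?thesis
    unfolding k_def using c_pos by simp
qed

lemma k_less_1: "k < 1"
  unfolding k_def using c_pos c_sq \<delta>_bounds by (simp add: pos_divide_less_eq)

lemma k_unique:
  assumes "0 < k'" "c\<^sup>2 * k'\<^sup>2 + 2 * (2 * a\<^sup>2 - c\<^sup>2) * k' - 3 * c\<^sup>2 = 0"
  shows "k' = k"
proof -
  have "(k' - k) * (c\<^sup>2 * (k' + k) + 2 * (2 * a\<^sup>2 - c\<^sup>2)) = 0"
    using assms(2) k_eq by algebra
  moreover have "c\<^sup>2 * (k' + k) + 2 * (2 * a\<^sup>2 - c\<^sup>2) > 0"
  proof -
    have "0 < c\<^sup>2 * (k' + k)" "0 < a\<^sup>2 + b\<^sup>2"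
      using assms(1) k_pos c_pos a_pos by (simp_all add: add_pos_nonneg)
    moreover have "2 * (2 * a\<^sup>2 - c\<^sup>2) = 2 * (a\<^sup>2 + b\<^sup>2)"
      using c_sq by simp
    ultimately show ?thesis
      by simp
  qed
  ultimately show ?thesis
    by simp
qed

lemma Re_ecc [simp]: "Re (ecc P) = fst P / a" and Im_ecc [simp]: "Im (ecc P) = snd P / b"
  by (simp_all add: ecc_def)

lemma norm_ecc: "on_ellipse a b P \<Longrightarrow> cmod (ecc P) = 1"
  by (simp add: on_ellipse_def cmod_def power_divide)

lemma ecc_inj: "ecc P = ecc Q \<Longrightarrow> P = Q"
  using a_pos b_pos by (simp add: complex_eq_iff prod_eq_iff)

lemma dist_focus:
  assumes "on_ellipse a b P" "\<bar>s\<bar> = 1"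
  shows "dist P (s * c, 0) = a - s * c * Re (ecc P)"
proof -
  define X Y where "X = Re (ecc P)" and "Y = Im (ecc P)"
  have unit: "X\<^sup>2 + Y\<^sup>2 = 1"
    using norm_ecc[OF assms(1)] unfolding X_def Y_def cmod_power2[symmetric] by simp
  have "\<bar>s * c * X\<bar> = c * \<bar>X\<bar>"
    using assms(2) c_pos by (simp add: abs_mult)
  also have "\<dots> \<le> c"
  proof -
    have "\<bar>X\<bar> \<le> 1"
      unfolding X_def using abs_Re_le_cmod[of "ecc P"] norm_ecc[OF assms(1)] by linarith
    then show ?thesis
      using c_pos by (simp add: mult_left_le)
  qed
  finally have "s * c * X < a"
    using c_less_a by linarith
  moreover have "(dist P (s * c, 0))\<^sup>2 = (a - s * c * X)\<^sup>2"
  proof -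
    have "fst P = a * X" "snd P = b * Y"
      using a_pos b_pos by (simp_all add: X_def Y_def)
    moreover have "s\<^sup>2 = 1"
      using power2_abs[of s] assms(2) by simp
    ultimately show ?thesis
      using unit c_sq by (simp add: dist_prod_def dist_real_def) algebra
  qed
  ultimately show ?thesis
    by (simp add: X_def power2_eq_iff_nonneg)
qed

lemma dist_focus1: "on_ellipse a b P \<Longrightarrow> dist P (- c, 0) = a + c * Re (ecc P)"
  using dist_focus[of P "- 1"] by simp

lemma dist_focus2: "on_ellipse a b P \<Longrightarrow> dist P (c, 0) = a - c * Re (ecc P)"
  using dist_focus[of P 1] by simp

lemma inner_ell_normal:
  assumes "on_ellipse a b P"
  shows "ell_normal a b P \<bullet> (Q - P) = - vers (ecc P) (ecc Q)"
proof -
  have "ell_normal a b P \<bullet> (Q - P)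
      = (fst P / a) * (fst Q / a) + (snd P / b) * (snd Q / b) - ((fst P)\<^sup>2 / a\<^sup>2 + (snd P)\<^sup>2 / b\<^sup>2)"
    using a_pos b_pos
    by (simp add: ell_normal_def inner_prod_def field_simps power2_eq_square)
  also have "\<dots> = - vers (ecc P) (ecc Q)"
    using assms by (simp add: on_ellipse_def vers_def)
  finally show ?thesis .
qed

lemma normal_bisects_vers_ratio:
  assumes "on_ellipse a b P" "normal_bisects a b P Q R"
  shows "vers (ecc P) (ecc Q) / dist P Q = vers (ecc P) (ecc R) / dist P R"
proof -
  define n where "n = ell_normal a b P"
  have "n \<noteq> 0"
    using assms(1) a_pos b_pos by (auto simp: n_def ell_normal_def on_ellipse_def zero_prod_def)
  have "n \<bullet> (Q - P) / (norm n * norm (Q - P)) = n \<bullet> (R - P) / (norm n * norm (R - P))"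
    using arg_cong[OF assms(2)[unfolded normal_bisects_def], of cos]
    unfolding cos_vangle n_def .
  then have "vers (ecc P) (ecc Q) / dist P Q / norm n = vers (ecc P) (ecc R) / dist P R / norm n"
    unfolding n_def inner_ell_normal[OF assms(1)]
    by (simp add: dist_norm norm_minus_commute mult.commute)
  with \<open>n \<noteq> 0\<close> show ?thesis
    by (metis divide_cancel_right norm_eq_zero)
qed

lemma chord_rel_of_ratio:
  assumes P: "on_ellipse a b P" and Q: "on_ellipse a b Q" and "P \<noteq> Q"
    and ratio: "J * dist P Q = vers (ecc P) (ecc Q)"
  shows "chord_rel (of_real (J\<^sup>2 * c\<^sup>2)) (of_real (1 - J\<^sup>2 * (a\<^sup>2 + b\<^sup>2))) (ecc P) (ecc Q)"
proof (rule chord_rel_of_real[OF norm_ecc[OF P] norm_ecc[OF Q]])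
  define X Y X' Y' where "X = Re (ecc P)" and "Y = Im (ecc P)" and "X' = Re (ecc Q)" and "Y' = Im (ecc Q)"
  have unit: "X\<^sup>2 + Y\<^sup>2 = 1" "X'\<^sup>2 + Y'\<^sup>2 = 1"
    using norm_ecc[OF P] norm_ecc[OF Q] unfolding X_def Y_def X'_def Y'_def cmod_power2[symmetric]
    by simp_all
  have vers: "vers (ecc P) (ecc Q) = 1 - X * X' - Y * Y'"
    by (simp add: vers_def X_def Y_def X'_def Y'_def)
  have "vers (ecc P) (ecc Q) \<noteq> 0"
    using unit_vers_pos[OF norm_ecc[OF P] norm_ecc[OF Q]] ecc_inj \<open>P \<noteq> Q\<close> by fastforce
  moreover have "(dist P Q)\<^sup>2 = a\<^sup>2 * (X - X')\<^sup>2 + b\<^sup>2 * (Y - Y')\<^sup>2"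
    using a_pos b_pos
    by (simp add: dist_prod_def dist_real_def X_def Y_def X'_def Y'_def power_divide field_simps)
  moreover have "J\<^sup>2 * (dist P Q)\<^sup>2 = (vers (ecc P) (ecc Q))\<^sup>2"
    using ratio by (metis power_mult_distrib)
  ultimately have "(1 - X * X' - Y * Y')
      * ((1 - J\<^sup>2 * c\<^sup>2) * (X * X') + (1 + J\<^sup>2 * c\<^sup>2) * (Y * Y') - (1 - J\<^sup>2 * (a\<^sup>2 + b\<^sup>2))) = 0"
    unfolding vers using unit c_sq by algebra
  with \<open>vers (ecc P) (ecc Q) \<noteq> 0\<close>
  have "(1 - J\<^sup>2 * c\<^sup>2) * (X * X') + (1 + J\<^sup>2 * c\<^sup>2) * (Y * Y') = 1 - J\<^sup>2 * (a\<^sup>2 + b\<^sup>2)"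
    unfolding vers by simp
  then show "Re (ecc P * cnj (ecc Q)) - J\<^sup>2 * c\<^sup>2 * Re (ecc P * ecc Q) = 1 - J\<^sup>2 * (a\<^sup>2 + b\<^sup>2)"
    unfolding X_def Y_def X'_def Y'_def by (simp add: algebra_simps)
qed

lemma three_periodic_common_ratio:
  assumes "three_periodic a b P1 P2 P3"
  obtains J where "0 < J" "J * dist P1 P2 = vers (ecc P1) (ecc P2)"
    "J * dist P2 P3 = vers (ecc P2) (ecc P3)" "J * dist P1 P3 = vers (ecc P1) (ecc P3)"
proof
  note tp = assms[unfolded three_periodic_def]
  define J where "J = vers (ecc P1) (ecc P2) / dist P1 P2"
  have "0 < vers (ecc P1) (ecc P2)"
    using tp unit_vers_pos[OF norm_ecc norm_ecc] ecc_inj by metis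
  then show "0 < J"
    using tp by (simp add: J_def)
  show "J * dist P1 P2 = vers (ecc P1) (ecc P2)"
    using tp by (simp add: J_def)
  show "J * dist P1 P3 = vers (ecc P1) (ecc P3)"
    using tp normal_bisects_vers_ratio[of P1 P2 P3] by (simp add: J_def)
  show "J * dist P2 P3 = vers (ecc P2) (ecc P3)"
    using tp normal_bisects_vers_ratio[of P2 P3 P1] by (simp add: J_def vers_commute dist_commute field_simps)
qed

lemma three_periodic_common_ratio_sq:
  assumes tp: "three_periodic a b P1 P2 P3" and "0 < J"
    and r12: "J * dist P1 P2 = vers (ecc P1) (ecc P2)"
    and r23: "J * dist P2 P3 = vers (ecc P2) (ecc P3)"
    and r13: "J * dist P1 P3 = vers (ecc P1) (ecc P3)"
  shows "J\<^sup>2 * c\<^sup>2 = k"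
proof -
  let ?k = "J\<^sup>2 * c\<^sup>2" and ?g = "1 - J\<^sup>2 * (a\<^sup>2 + b\<^sup>2)"
  note tp' = tp[unfolded three_periodic_def]
  have "2 * complex_of_real ?g = (complex_of_real ?k)\<^sup>2 - 1"
  proof (rule chord_rel_triangle(3))
    show "chord_rel (of_real ?k) (of_real ?g) (ecc P1) (ecc P2)"
      "chord_rel (of_real ?k) (of_real ?g) (ecc P2) (ecc P3)"
      "chord_rel (of_real ?k) (of_real ?g) (ecc P1) (ecc P3)"
      using chord_rel_of_ratio tp' r12 r23 r13 by blast+
    show "ecc P1 \<noteq> ecc P2" "ecc P2 \<noteq> ecc P3" "ecc P1 \<noteq> ecc P3"
      using tp' ecc_inj by blast+
    have "cmod (ecc P1) = 1"
      using tp' norm_ecc by blast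
    then show "ecc P1 \<noteq> 0"
      by auto
  qed
  then have "complex_of_real (2 * ?g) = complex_of_real (?k\<^sup>2 - 1)"
    by simp
  then have "2 * ?g = ?k\<^sup>2 - 1"
    by (simp only: of_real_eq_iff)
  then have "c\<^sup>2 * ?k\<^sup>2 + 2 * (2 * a\<^sup>2 - c\<^sup>2) * ?k - 3 * c\<^sup>2 = 0"
    using c_sq by algebra
  moreover have "0 < ?k"
    using \<open>0 < J\<close> c_pos by simp
  ultimately show ?thesis
    by (rule k_unique[rotated])
qed

lemma three_periodic_vers_ratio:
  assumes "three_periodic a b P1 P2 P3"
  shows "c * vers (ecc P1) (ecc P2) = sqrt k * dist P1 P2"
proof -
  obtain J where J: "0 < J" "J * dist P1 P2 = vers (ecc P1) (ecc P2)"
    "J * dist P2 P3 = vers (ecc P2) (ecc P3)" "J * dist P1 P3 = vers (ecc P1) (ecc P3)"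
    using three_periodic_common_ratio[OF assms] by blast
  have "sqrt k = J * c"
    using three_periodic_common_ratio_sq[OF assms J] J(1) c_pos
    by (metis power_mult_distrib real_sqrt_abs abs_of_pos mult_pos_pos)
  then show ?thesis
    using J(2) by (simp add: algebra_simps)
qed

lemma three_periodic_chord_rel:
  assumes "three_periodic a b P1 P2 P3"
  shows "chord_rel (of_real k) (of_real ((k\<^sup>2 - 1) / 2)) (ecc P1) (ecc P2)"
proof -
  obtain J where J: "0 < J" "J * dist P1 P2 = vers (ecc P1) (ecc P2)"
    "J * dist P2 P3 = vers (ecc P2) (ecc P3)" "J * dist P1 P3 = vers (ecc P1) (ecc P3)"
    using three_periodic_common_ratio[OF assms] by blast
  have k: "J\<^sup>2 * c\<^sup>2 = k"
    by (rule three_periodic_common_ratio_sq[OF assms J])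
  have "2 * c\<^sup>2 * (1 - J\<^sup>2 * (a\<^sup>2 + b\<^sup>2)) = c\<^sup>2 * (k\<^sup>2 - 1)"
    using k[symmetric] k_eq c_sq by algebra
  then have "1 - J\<^sup>2 * (a\<^sup>2 + b\<^sup>2) = (k\<^sup>2 - 1) / 2"
    using c_pos by simp
  with k show ?thesis
    using chord_rel_of_ratio[OF _ _ _ J(2)] assms[unfolded three_periodic_def] by metis
qed

lemma on_ellipse_neq_foci:
  assumes "on_ellipse a b P"
  shows "P \<noteq> (- c, 0)" "P \<noteq> (c, 0)"
  using assms c_pos c_less_a a_pos by (auto simp: on_ellipse_def power_divide)

lemma vertex_cos_formula:
  assumes "0 < e" "e = a - c * X"
  shows "(a ^ 3 * (1 + k) - c * (k * c\<^sup>2 + 4 * a\<^sup>2 - 3 * c\<^sup>2) * X) / (2 * a\<^sup>2 * e)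
    = (\<delta> + b\<^sup>2) / a\<^sup>2 + (\<delta> - 2 * a\<^sup>2 + b\<^sup>2) * b\<^sup>2 / (a * c\<^sup>2 * e)"
proof -
  have "c\<^sup>2 * (a ^ 3 * (1 + k) - c * (k * c\<^sup>2 + 4 * a\<^sup>2 - 3 * c\<^sup>2) * X)
      = 2 * c\<^sup>2 * e * (\<delta> + b\<^sup>2) + 2 * a * (\<delta> - 2 * a\<^sup>2 + b\<^sup>2) * b\<^sup>2"
    using assms(2) k_c_sq c_sq by algebra
  then show ?thesis
    using assms(1) a_pos c_pos by (simp add: field_simps) algebra
qed

lemma three_periodic_vertex_cos:
  assumes tp: "three_periodic a b P1 P2 P3"
  defines "z1 \<equiv> ecc P1" and "z2 \<equiv> ecc P2" and "z3 \<equiv> ecc P3"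
  shows "cos_of_sides ((a + c * Re z1) * vers z2 z3) ((a + c * Re z3) * vers z1 z2)
      ((a + c * Re z2) * vers z1 z3)
    = (\<delta> + b\<^sup>2) / a\<^sup>2 + (\<delta> - 2 * a\<^sup>2 + b\<^sup>2) * b\<^sup>2 / (a * c\<^sup>2 * (a - c * Re z1))"
proof -
  note tp' = tp[unfolded three_periodic_def]
  have tp3: "three_periodic a b P3 P1 P2"
    using tp three_periodic_rotate by blast
  have u: "cmod z1 = 1" "cmod z2 = 1" "cmod z3 = 1"
    using tp' norm_ecc by (simp_all add: z1_def z2_def z3_def)
  have pos: "0 < a + c * Re z2" "0 < a + c * Re z3" "0 < a - c * Re z1"
    using tp' dist_focus1 dist_focus2 on_ellipse_neq_foci
    by (metis z1_def z2_def z3_def zero_less_dist_iff)+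
  have vers_pos: "0 < vers z1 z2" "0 < vers z1 z3"
    using tp' ecc_inj unit_vers_pos u by (metis z1_def z2_def z3_def)+
  have "chord_rel (of_real k) (of_real ((k\<^sup>2 - 1) / 2)) z1 z2"
    "chord_rel (of_real k) (of_real ((k\<^sup>2 - 1) / 2)) z1 z3"
    using three_periodic_chord_rel[OF tp] chord_rel_sym[OF three_periodic_chord_rel[OF tp3]]
    by (simp_all add: z1_def z2_def z3_def)
  moreover have "z2 \<noteq> z3"
    using tp' ecc_inj unfolding z2_def z3_def by blast
  ultimately have "(((a + c * Re z2) * vers z1 z3)\<^sup>2 + ((a + c * Re z3) * vers z1 z2)\<^sup>2
        - ((a + c * Re z1) * vers z2 z3)\<^sup>2) * (a - c * Re z1) * a\<^sup>2
      = ((a + c * Re z2) * vers z1 z3) * ((a + c * Re z3) * vers z1 z2)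
        * (a ^ 3 * (1 + k) - c * (k * c\<^sup>2 + 4 * a\<^sup>2 - 3 * c\<^sup>2) * Re z1)"
    using unit_vertex_cos_identity[OF u] k_eq k_pos k_less_1 by simp
  then have "(((a + c * Re z3) * vers z1 z2)\<^sup>2 + ((a + c * Re z2) * vers z1 z3)\<^sup>2
        - ((a + c * Re z1) * vers z2 z3)\<^sup>2) * (2 * a\<^sup>2 * (a - c * Re z1))
      = (a ^ 3 * (1 + k) - c * (k * c\<^sup>2 + 4 * a\<^sup>2 - 3 * c\<^sup>2) * Re z1)
        * (2 * ((a + c * Re z3) * vers z1 z2) * ((a + c * Re z2) * vers z1 z3))"
    by algebra
  then have "cos_of_sides ((a + c * Re z1) * vers z2 z3) ((a + c * Re z3) * vers z1 z2)
      ((a + c * Re z2) * vers z1 z3)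
    = (a ^ 3 * (1 + k) - c * (k * c\<^sup>2 + 4 * a\<^sup>2 - 3 * c\<^sup>2) * Re z1) / (2 * a\<^sup>2 * (a - c * Re z1))"
    unfolding cos_of_sides_def using pos vers_pos a_pos by (simp add: frac_eq_eq)
  also have "\<dots> = (\<delta> + b\<^sup>2) / a\<^sup>2 + (\<delta> - 2 * a\<^sup>2 + b\<^sup>2) * b\<^sup>2 / (a * c\<^sup>2 * (a - c * Re z1))"
    using vertex_cos_formula pos(3) by simp
  finally show ?thesis .
qed

lemma cos_focus_inversive_angle:
  assumes tp: "three_periodic a b P1 P2 P3" and "0 < \<rho>"
  shows "cos (tri_angle (circ_inv (- c, 0) \<rho> P1) (circ_inv (- c, 0) \<rho> P2) (circ_inv (- c, 0) \<rho> P3))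
    = (\<delta> + b\<^sup>2) / a\<^sup>2 + (\<delta> - 2 * a\<^sup>2 + b\<^sup>2) * b\<^sup>2 / (a * c\<^sup>2 * dist P1 (c, 0))"
proof -
  define z1 z2 z3 where "z1 = ecc P1" and "z2 = ecc P2" and "z3 = ecc P3"
  note tp' = tp[unfolded three_periodic_def]
  have d: "dist P1 (- c, 0) = a + c * Re z1" "dist P2 (- c, 0) = a + c * Re z2"
    "dist P3 (- c, 0) = a + c * Re z3"
    using tp' dist_focus1 by (simp_all add: z1_def z2_def z3_def)
  have "sqrt k > 0"
    using k_pos by simp
  then have dist: "dist P1 P2 = c / sqrt k * vers z1 z2" "dist P2 P3 = c / sqrt k * vers z2 z3"
    "dist P1 P3 = c / sqrt k * vers z1 z3"
    using three_periodic_vers_ratio[OF tp] three_periodic_vers_ratio[OF three_periodic_rotate[OF tp]]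
      three_periodic_vers_ratio[OF three_periodic_rotate[OF three_periodic_rotate[OF tp]]]
    by (simp_all add: z1_def z2_def z3_def field_simps dist_commute vers_commute)
  have "cos (tri_angle (circ_inv (- c, 0) \<rho> P1) (circ_inv (- c, 0) \<rho> P2) (circ_inv (- c, 0) \<rho> P3))
      = cos_of_sides (dist P2 P3 * dist P1 (- c, 0)) (dist P1 P2 * dist P3 (- c, 0))
          (dist P1 P3 * dist P2 (- c, 0))"
    using cos_tri_angle_circ_inv \<open>0 < \<rho>\<close> tp' on_ellipse_neq_foci by simp
  also have "\<dots> = cos_of_sides (c / sqrt k * ((a + c * Re z1) * vers z2 z3))
      (c / sqrt k * ((a + c * Re z3) * vers z1 z2)) (c / sqrt k * ((a + c * Re z2) * vers z1 z3))"
    unfolding d dist by (simp only: ac_simps)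
  also have "\<dots> = cos_of_sides ((a + c * Re z1) * vers z2 z3) ((a + c * Re z3) * vers z1 z2)
      ((a + c * Re z2) * vers z1 z3)"
    by (rule cos_of_sides_scale) (use c_pos \<open>sqrt k > 0\<close> in simp)
  also have "\<dots> = (\<delta> + b\<^sup>2) / a\<^sup>2 + (\<delta> - 2 * a\<^sup>2 + b\<^sup>2) * b\<^sup>2 / (a * c\<^sup>2 * dist P1 (c, 0))"
    using three_periodic_vertex_cos[OF tp] tp' dist_focus2 by (simp add: z1_def z2_def z3_def)
  finally show ?thesis .
qed

lemma sum_inverse_dist_focus2:
  assumes tp: "three_periodic a b P1 P2 P3"
  shows "1 / dist P1 (c, 0) + 1 / dist P2 (c, 0) + 1 / dist P3 (c, 0)
    = a * (2 * \<delta> - a\<^sup>2 - b\<^sup>2) / ((a\<^sup>2 - \<delta>) * (\<delta> - b\<^sup>2))"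
proof -
  note tp' = tp[unfolded three_periodic_def]
  have tp2: "three_periodic a b P2 P3 P1" and tp3: "three_periodic a b P3 P1 P2"
    using tp three_periodic_rotate by blast+
  define e1 e2 e3 where "e1 = dist P1 (c, 0)" and "e2 = dist P2 (c, 0)" and "e3 = dist P3 (c, 0)"
  have e_pos: "0 < e1" "0 < e2" "0 < e3"
    using tp' on_ellipse_neq_foci by (simp_all add: e1_def e2_def e3_def)
  have "e1 = a - c * Re (ecc P1)" "e2 = a - c * Re (ecc P2)" "e3 = a - c * Re (ecc P3)"
    using tp' dist_focus2 by (simp_all add: e1_def e2_def e3_def)
  moreover have "ecc P1 \<noteq> ecc P2" "ecc P2 \<noteq> ecc P3" "ecc P1 \<noteq> ecc P3"
    using tp' ecc_inj by blast+
  ultimately have "(e1 * e2 + e1 * e3 + e2 * e3) * (2 * k * a\<^sup>2 - c\<^sup>2 * (k + 1)) = 2 * a * k * (e1 * e2 * e3)"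
    using unit_reciprocal_sum_identity[OF norm_ecc norm_ecc norm_ecc three_periodic_chord_rel[OF tp]
        three_periodic_chord_rel[OF tp2] chord_rel_sym[OF three_periodic_chord_rel[OF tp3]] _ _ _ k_eq]
      tp' by simp
  moreover have "c\<^sup>2 * (2 * k * a\<^sup>2 - c\<^sup>2 * (k + 1)) = 2 * ((a\<^sup>2 - \<delta>) * (\<delta> - b\<^sup>2))"
    using k_c_sq c_sq \<delta>_sq by algebra
  moreover have "0 < (a\<^sup>2 - \<delta>) * (\<delta> - b\<^sup>2)"
    using \<delta>_bounds by simp
  ultimately show ?thesis
    using e_pos c_pos k_c_sq unfolding e1_def[symmetric] e2_def[symmetric] e3_def[symmetric]
    by (simp add: field_simps) algebra
qed

lemma cos_sum_closed_form:
  "3 * ((\<delta> + b\<^sup>2) / a\<^sup>2) + (\<delta> - 2 * a\<^sup>2 + b\<^sup>2) * b\<^sup>2 / (a * c\<^sup>2)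
      * (a * (2 * \<delta> - a\<^sup>2 - b\<^sup>2) / ((a\<^sup>2 - \<delta>) * (\<delta> - b\<^sup>2)))
    = \<delta> * (a\<^sup>2 + c\<^sup>2 - \<delta>) / (a\<^sup>2 * c\<^sup>2)"
proof -
  define D where "D = (a\<^sup>2 - \<delta>) * (\<delta> - b\<^sup>2)"
  have "D \<noteq> 0"
    using \<delta>_bounds by (simp add: D_def)
  have "3 * c\<^sup>2 * D * (\<delta> + b\<^sup>2) + a\<^sup>2 * b\<^sup>2 * (\<delta> - 2 * a\<^sup>2 + b\<^sup>2) * (2 * \<delta> - a\<^sup>2 - b\<^sup>2)
      = \<delta> * (a\<^sup>2 + c\<^sup>2 - \<delta>) * D"
    unfolding D_def using c_sq \<delta>_sq by algebra
  then show ?thesis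
    unfolding D_def[symmetric] using a_pos c_pos \<open>D \<noteq> 0\<close> by (simp add: field_simps) algebra
qed

end

theorem mainTheorem7:
  fixes a b \<rho> :: real and P1 P2 P3 :: "real \<times> real"
  assumes "a > b" and "b > 0" and "\<rho> > 0"
    and "three_periodic a b P1 P2 P3"
  shows "let c = sqrt (a\<^sup>2 - b\<^sup>2);
             \<delta> = sqrt (a^4 - a\<^sup>2 * b\<^sup>2 + b^4);
             f1 = (- c, 0);
             Q1 = circ_inv f1 \<rho> P1; Q2 = circ_inv f1 \<rho> P2; Q3 = circ_inv f1 \<rho> P3
         in cos (tri_angle Q1 Q2 Q3) + cos (tri_angle Q2 Q3 Q1) + cos (tri_angle Q3 Q1 Q2)
            = \<delta> * (a\<^sup>2 + c\<^sup>2 - \<delta>) / (a\<^sup>2 * c\<^sup>2)"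
proof -
  interpret ellipse a b
    using assms(1,2) by unfold_locales
  have tp: "three_periodic a b P1 P2 P3" and tp2: "three_periodic a b P2 P3 P1"
    and tp3: "three_periodic a b P3 P1 P2"
    using assms(4) three_periodic_rotate by blast+
  have "cos (tri_angle (circ_inv (- c, 0) \<rho> P1) (circ_inv (- c, 0) \<rho> P2) (circ_inv (- c, 0) \<rho> P3))
      + cos (tri_angle (circ_inv (- c, 0) \<rho> P2) (circ_inv (- c, 0) \<rho> P3) (circ_inv (- c, 0) \<rho> P1))
      + cos (tri_angle (circ_inv (- c, 0) \<rho> P3) (circ_inv (- c, 0) \<rho> P1) (circ_inv (- c, 0) \<rho> P2))
    = 3 * ((\<delta> + b\<^sup>2) / a\<^sup>2) + (\<delta> - 2 * a\<^sup>2 + b\<^sup>2) * b\<^sup>2 / (a * c\<^sup>2)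
      * (1 / dist P1 (c, 0) + 1 / dist P2 (c, 0) + 1 / dist P3 (c, 0))"
    unfolding cos_focus_inversive_angle[OF tp assms(3)] cos_focus_inversive_angle[OF tp2 assms(3)]
      cos_focus_inversive_angle[OF tp3 assms(3)]
    by (simp add: divide_inverse inverse_mult_distrib algebra_simps)
  also have "\<dots> = \<delta> * (a\<^sup>2 + c\<^sup>2 - \<delta>) / (a\<^sup>2 * c\<^sup>2)"
    unfolding sum_inverse_dist_focus2[OF tp] by (rule cos_sum_closed_form)
  finally show ?thesis
    unfolding Let_def c_def[symmetric] \<delta>_def[symmetric] .
qed

end
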